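(* Let $f:\mathbb{R}^{n\times n}\to\mathbb{R}$ be differentiable with $\|\nabla f(X)-\nabla f(Y)\|_{\mathsf F}\le L\|X-Y\|_{\mathsf F}$ for all $X,Y\in\mathcal{D}_{[0,1]^n}$, and suppose there are constants $\underline{\nu}_f\le\overline{\nu}_f$ with $\frac{\underline{\nu}_f}{2}\|Y-X\|_{\mathsf F}^2\le f(Y)-f(X)-\langle\nabla f(X),Y-X\rangle\le\frac{\overline{\nu}_f}{2}\|Y-X\|_{\mathsf F}^2$ for all $X,Y\in\mathcal{D}_n$. Let $0<p<1$ and consider \[ \min_{X\in\mathcal{D}_n}\ F_{\sigma,p,\epsilon}(X):=f(X)+\sigma\sum_{i,j=1}^n (X_{ij}+\epsilon)^p . \] (a) Let $\epsilon>0$ and let $c>1$ be a constant. If \[ \sigma>\bar\sigma_{p,\epsilon}:=\frac{c}{p}\cdot\frac{L(2+\sqrt n)+\|\nabla f(\mathbf 0)\|_{\mathsf F}}{\epsilon^{p-1}-(1/2+\epsilon)^{p-1}}, \] then every permutation matrix is a local minimizer of this problem. (b) Let $\epsilon\ge0$. If $\sigma>\sigma^*_{p,\epsilon}:=\max\{\overline{\nu}_f/\overline{\nu}_h,0\}$ with $\overline{\nu}_h=p(1-p)(1+\epsilon)^{p-2}$, then every local minimizer of this problem is a permutation matrix.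
   Context: $\mathcal{D}_n=\{X\in\mathbb{R}^{n\times n}: X\mathbf{e}=X^{\mathsf T}\mathbf{e}=\mathbf{e},\ X\ge0\}$ is the set of doubly stochastic matrices ($\mathbf e$ the all-ones vector), $\mathcal{D}_{[0,1]^n}=\{X\in\mathbb{R}^{n\times n}:0\le X_{ij}\le1\}$, $\mathbf 0$ the zero matrix, $\langle M,N\rangle=\mathrm{tr}(M^{\mathsf T}N)$, $\|\cdot\|_{\mathsf F}$ the Frobenius norm. *)

theory Defs
  imports "HOL-Analysis.Analysis"
begin

text \<open>n x n real matrices are rendered as real^'n^'n; the inner product on this type
  is the trace inner product and its norm is the Frobenius norm.\<close>

definition doubly_stochastic :: "real^'n^'n \<Rightarrow> bool" where
  "doubly_stochastic X \<longleftrightarrow>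
     (\<forall>i j. X $ i $ j \<ge> 0) \<and> (\<forall>i. (\<Sum>j\<in>UNIV. X $ i $ j) = 1) \<and> (\<forall>j. (\<Sum>i\<in>UNIV. X $ i $ j) = 1)"

definition unit_box_matrix :: "real^'n^'n \<Rightarrow> bool" where
  "unit_box_matrix X \<longleftrightarrow> (\<forall>i j. 0 \<le> X $ i $ j \<and> X $ i $ j \<le> 1)"

definition permutation_matrix :: "real^'n^'n \<Rightarrow> bool" where
  "permutation_matrix X \<longleftrightarrow>
     (\<exists>\<pi>. \<pi> permutes (UNIV :: 'n set) \<and> (\<forall>i j. X $ i $ j = (if j = \<pi> i then 1 else 0)))"

definition local_minimizer_on :: "('a::metric_space \<Rightarrow> real) \<Rightarrow> 'a set \<Rightarrow> 'a \<Rightarrow> bool" where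
  "local_minimizer_on F S X \<longleftrightarrow>
     X \<in> S \<and> (\<exists>\<delta>>0. \<forall>Y\<in>S. dist Y X < \<delta> \<longrightarrow> F X \<le> F Y)"

definition F_obj :: "(real^'n^'n \<Rightarrow> real) \<Rightarrow> real \<Rightarrow> real \<Rightarrow> real \<Rightarrow> real^'n^'n \<Rightarrow> real" where
  "F_obj f \<sigma> p \<epsilon> X = f X + \<sigma> * (\<Sum>i\<in>UNIV. \<Sum>j\<in>UNIV. (X $ i $ j + \<epsilon>) powr p)"

end

theory Submission
  imports Defs
begin

(*
  (a) If Y is doubly stochastic and close to the permutation matrix P of \<pi>, then
  norm (Y - P) is at most the deficit m = \<Sum>i. 1 - Y i (\<pi> i). Moving the mass m off the pattern
  of P raises the concave penalty, by the mean value theorem, at a rate of at least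
  p ((norm (Y - P) + \<epsilon>) powr (p - 1) - (1/2 + \<epsilon>) powr (p - 1)) per unit, while f can decrease
  by at most about norm (G P) * m. The Lipschitz bound norm (G P) \<le> norm (G 0) + L sqrt n and
  the choice of \<sigma> make the penalty win.

  (b) If a doubly stochastic X has a fractional entry, every row and column containing a
  fractional entry contains at least two, so the fractional positions outnumber the rows plus
  columns they occupy; their incidence vectors are then linearly dependent, which yields a
  nonzero D with zero line sums supported on them. Along X \<plusminus> s D the penalty is strongly
  concave with modulus p (1 - p) (1 + \<epsilon>) powr (p - 2) while f is at most nu_hi-convex, so once
  \<sigma> times this modulus exceeds nu_hi, one of X \<plusminus> s D beats X, which is no local minimizer.
*)

section \<open>Concavity of the power function\<close>

lemma powr_diff_mean_value:
  fixes a b p :: real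
  assumes "0 < a" "a < b"
  obtains z where "a < z" "z < b" "b powr p - a powr p = p * (b - a) * z powr (p - 1)"
proof -
  have "\<And>x. a \<le> x \<Longrightarrow> x \<le> b \<Longrightarrow> ((\<lambda>x. x powr p) has_real_derivative p * x powr (p - 1)) (at x)"
    using assms by (intro has_real_derivative_powr) auto
  then show ?thesis
    using MVT2[OF assms(2), of "\<lambda>x. x powr p" "\<lambda>x. p * x powr (p - 1)"] that
    by (auto simp: algebra_simps)
qed

lemma powr_diff_ge_slope:
  fixes a b c p :: real
  assumes "0 < a" "a \<le> b" "b \<le> c" "0 < p" "p < 1"
  shows "p * (b - a) * c powr (p - 1) \<le> b powr p - a powr p"
proof (cases "a = b")
  case False
  with assms obtain z where z: "a < z" "z < b" "b powr p - a powr p = p * (b - a) * z powr (p - 1)"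
    by (metis order_le_neq_trans powr_diff_mean_value)
  have "c powr (p - 1) \<le> z powr (p - 1)"
    using z assms by (intro powr_mono2') auto
  with z assms show ?thesis
    by (simp add: mult_left_mono)
qed simp

lemma powr_diff_le_slope:
  fixes a b c p :: real
  assumes "0 < c" "c \<le> a" "a \<le> b" "0 < p" "p < 1"
  shows "b powr p - a powr p \<le> p * (b - a) * c powr (p - 1)"
proof (cases "a = b")
  case False
  with assms obtain z where z: "a < z" "z < b" "b powr p - a powr p = p * (b - a) * z powr (p - 1)"
    by (metis order_le_neq_trans order_less_le_trans powr_diff_mean_value)
  have "z powr (p - 1) \<le> c powr (p - 1)"
    using z assms by (intro powr_mono2') auto
  with z assms show ?thesis
    by (simp add: mult_left_mono)
qed simp

lemma powr_midpoint_concavity_gap: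
  fixes x u e p :: real
  assumes "\<bar>u\<bar> < x" "x + \<bar>u\<bar> \<le> 1" "0 \<le> e" "0 < p" "p < 1"
  shows "(x + u + e) powr p + (x - u + e) powr p - 2 * (x + e) powr p
           \<le> - (p * (1 - p) * (1 + e) powr (p - 2)) * u\<^sup>2"
proof -
  define nu where "nu = p * (1 - p) * (1 + e) powr (p - 2)"
  define k where "k y = - ((y + e) powr p) - nu / 2 * y\<^sup>2" for y
  have convex: "convex_on {0<..1} k"
  proof (rule f''_ge0_imp_convex)
    fix y :: real assume y: "y \<in> {0<..1}"
    then show "(k has_real_derivative - (p * (y + e) powr (p - 1)) - nu * y) (at y)"
      unfolding k_def using assms by (auto intro!: derivative_eq_intros)
    show "((\<lambda>y. - (p * (y + e) powr (p - 1)) - nu * y) has_real_derivative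
            p * (1 - p) * (y + e) powr (p - 2) - nu) (at y)"
      using y assms by (auto intro!: derivative_eq_intros simp: algebra_simps)
    have "(1 + e) powr (p - 2) \<le> (y + e) powr (p - 2)"
      using y assms by (intro powr_mono2') auto
    then show "0 \<le> p * (1 - p) * (y + e) powr (p - 2) - nu"
      unfolding nu_def using assms by (simp add: mult_left_mono)
  qed auto
  have "(1 - 1/2) *\<^sub>R (x - u) + (1/2) *\<^sub>R (x + u) = x"
    by (simp add: field_simps)
  moreover have "x - u \<in> {0<..1}" "x + u \<in> {0<..1}"
    using assms by auto
  ultimately have "k x \<le> (1 - 1/2) * k (x - u) + 1/2 * k (x + u)"
    using convex_onD[OF convex, of "1/2" "x - u" "x + u"] by simp
  then show ?thesis
    unfolding k_def nu_def[symmetric] by (simp add: power2_eq_square algebra_simps)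
qed

section \<open>Doubly stochastic and permutation matrices\<close>

definition zero_line_sums :: "real^'n^'n \<Rightarrow> bool" where
  "zero_line_sums D \<longleftrightarrow> (\<forall>i. (\<Sum>j\<in>UNIV. D $ i $ j) = 0) \<and> (\<forall>j. (\<Sum>i\<in>UNIV. D $ i $ j) = 0)"

lemma zero_line_sums_scaleR: "zero_line_sums D \<Longrightarrow> zero_line_sums (c *\<^sub>R D)"
  by (simp add: zero_line_sums_def sum_distrib_left[symmetric])

lemma norm_matrix_sq: "(norm (X::real^'n^'n))\<^sup>2 = (\<Sum>i\<in>UNIV. \<Sum>j\<in>UNIV. (X$i$j)\<^sup>2)"
  unfolding power2_norm_eq_inner by (simp add: inner_vec_def power2_eq_square)

lemma abs_matrix_entry_le_norm: "\<bar>(X::real^'n^'n)$i$j\<bar> \<le> norm X"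
  using component_le_norm_cart[of "X$i" j] Finite_Cartesian_Product.norm_nth_le[of X i]
  by linarith

lemma doubly_stochastic_entry_bounds:
  assumes "doubly_stochastic X"
  shows "0 \<le> X$i$j" "X$i$j \<le> 1"
proof -
  show "0 \<le> X$i$j" using assms by (simp add: doubly_stochastic_def)
  have "X$i$j \<le> (\<Sum>j\<in>UNIV. X$i$j)"
    using assms by (intro member_le_sum) (auto simp: doubly_stochastic_def)
  with assms show "X$i$j \<le> 1" by (simp add: doubly_stochastic_def)
qed

lemma add_le_sum_UNIV:
  fixes g :: "'a::finite \<Rightarrow> real"
  assumes "\<And>x. 0 \<le> g x" "a \<noteq> b"
  shows "g a + g b \<le> sum g UNIV"
  using sum_mono2[of UNIV "{a, b}" g] assms by simp

lemma permutation_matrix_doubly_stochastic: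
  assumes "permutation_matrix P"
  shows "doubly_stochastic P"
proof -
  obtain \<pi> where \<pi>: "\<pi> permutes UNIV" and P: "\<And>i j. P$i$j = (if j = \<pi> i then 1 else 0)"
    using assms unfolding permutation_matrix_def by blast
  have P': "P$i$j = (if i = inv \<pi> j then 1 else 0)" for i j
    using P[of i j] permutes_inv_eq[OF \<pi>, of j i] by auto
  show ?thesis
    unfolding doubly_stochastic_def
  proof (intro conjI allI)
    show "0 \<le> P$i$j" "(\<Sum>j\<in>UNIV. P$i$j) = 1" for i j by (simp_all add: P)
    show "(\<Sum>i\<in>UNIV. P$i$j) = 1" for j by (simp add: P')
  qed
qed

lemma doubly_stochastic_01_imp_permutation_matrix:
  fixes X :: "real^'n^'n"
  assumes X: "doubly_stochastic X" and entries_01: "\<And>i j. X$i$j = 0 \<or> X$i$j = 1"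
  shows "permutation_matrix X"
proof -
  have line_sum_eq_1: "(\<Sum>j\<in>UNIV. X$i$j) = 1" "(\<Sum>i\<in>UNIV. X$i$j) = 1" for i j
    using X by (auto simp: doubly_stochastic_def)
  have nonneg: "0 \<le> X$i$j" for i j
    using X by (simp add: doubly_stochastic_def)
  have ex: "\<exists>j. X$i$j = 1" for i
  proof (rule ccontr)
    assume "\<nexists>j. X$i$j = 1"
    then have "\<forall>j. X$i$j = 0" using entries_01 by metis
    then have "(\<Sum>j\<in>UNIV. X$i$j) = 0" by simp
    then show False using line_sum_eq_1(1)[of i] by simp
  qed
  have row_unique: "j = j'" if "X$i$j = 1" "X$i$j' = 1" for i j j'
  proof (rule ccontr)
    assume "j \<noteq> j'"
    then have "X$i$j + X$i$j' \<le> (\<Sum>j\<in>UNIV. X$i$j)" using nonneg by (intro add_le_sum_UNIV)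
    then show False using that line_sum_eq_1(1)[of i] by simp
  qed
  have col_unique: "i = i'" if "X$i$j = 1" "X$i'$j = 1" for i i' j
  proof (rule ccontr)
    assume "i \<noteq> i'"
    then have "X$i$j + X$i'$j \<le> (\<Sum>i\<in>UNIV. X$i$j)" using nonneg by (intro add_le_sum_UNIV)
    then show False using that line_sum_eq_1(2)[of j] by simp
  qed
  define \<pi> where "\<pi> i = (THE j. X$i$j = 1)" for i
  have \<pi>: "X$i$(\<pi> i) = 1" for i
    unfolding \<pi>_def by (rule theI') (use ex row_unique in blast)
  have entries: "X$i$j = (if j = \<pi> i then 1 else 0)" for i j
    using entries_01[of i j] row_unique[OF \<pi>[of i], of j] \<pi>[of i] by fastforce
  have "inj \<pi>"
    by (rule injI) (use \<pi> col_unique in metis)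
  then have "\<pi> permutes UNIV"
    by (intro bij_imp_permutes) (simp_all add: bij_betw_def finite_UNIV_inj_surj)
  with entries show ?thesis
    unfolding permutation_matrix_def by blast
qed

lemma doubly_stochastic_add_zero_line_sums:
  assumes "doubly_stochastic X" "zero_line_sums E" "\<And>i j. \<bar>E$i$j\<bar> \<le> X$i$j"
  shows "doubly_stochastic (X + E)" "doubly_stochastic (X - E)"
proof -
  have "0 \<le> X$i$j + E$i$j" "0 \<le> X$i$j - E$i$j" for i j
    using assms(3)[of i j] by (simp_all add: abs_le_iff)
  with assms(1,2) show "doubly_stochastic (X + E)" "doubly_stochastic (X - E)"
    by (auto simp: doubly_stochastic_def zero_line_sums_def sum.distrib sum_subtractf)
qed

section \<open>Directions with zero line sums at non-vertices\<close>

lemma card_fractional_entries_ge_2: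
  fixes g :: "'a::finite \<Rightarrow> real"
  assumes "\<And>j. 0 \<le> g j \<and> g j \<le> 1" "sum g UNIV = 1" "0 < g j0" "g j0 < 1"
  shows "2 \<le> card {j. 0 < g j \<and> g j < 1}"
proof (rule ccontr)
  assume "\<not> ?thesis"
  moreover have "j0 \<in> {j. 0 < g j \<and> g j < 1}" using assms by auto
  ultimately have fractional: "{j. 0 < g j \<and> g j < 1} = {j0}"
    using card_le_Suc0_iff_eq[of "{j. 0 < g j \<and> g j < 1}"] by fastforce
  have "g j \<in> \<int>" if "j \<noteq> j0" for j
  proof -
    have "g j = 0 \<or> g j = 1" using fractional that assms(1)[of j] by force
    then show ?thesis by auto
  qed
  then have "1 - sum g (UNIV - {j0}) \<in> \<int>"
    by (intro Ints_diff Ints_sum) auto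
  moreover have "g j0 = 1 - sum g (UNIV - {j0})"
    using assms(2) sum.remove[of UNIV j0 g] by simp
  ultimately have "g j0 \<in> \<int>" by simp
  with assms(3,4) show False by (auto elim!: Ints_cases)
qed

lemma card_ge_twice_card_fst:
  fixes F :: "('a::finite \<times> 'b::finite) set"
  assumes "\<And>i. i \<in> fst ` F \<Longrightarrow> 2 \<le> card {j. (i, j) \<in> F}"
  shows "2 * card (fst ` F) \<le> card F"
proof -
  have "F = (SIGMA i:fst ` F. {j. (i, j) \<in> F})" by force
  then have "card F = (\<Sum>i\<in>fst ` F. card {j. (i, j) \<in> F})"
    by (metis card_SigmaI finite)
  also have "\<dots> \<ge> (\<Sum>i\<in>fst ` F. 2)"
    using assms by (intro sum_mono) auto
  finally show ?thesis by simp
qed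

lemma incidence_vectors_dependent:
  fixes F :: "('n::finite \<times> 'm::finite) set"
  assumes "F \<noteq> {}" "card (fst ` F) + card (snd ` F) \<le> card F"
  shows "dependent ((\<lambda>(i, j). (axis i (1::real), axis j (1::real))) ` F)"
proof (rule ccontr)
  define v :: "'n \<times> 'm \<Rightarrow> (real^'n) \<times> (real^'m)"
    where "v = (\<lambda>(i, j). (axis i 1, axis j 1))"
  assume "\<not> dependent (v ` F)"
  obtain c0 where c0: "c0 \<in> snd ` F" using assms(1) by auto
  \<comment> \<open>the incidence vectors lie in the span of the card (fst ` F) + card (snd ` F) - 1 vectors in S\<close>
  define S :: "((real^'n) \<times> (real^'m)) set"
    where "S = (\<lambda>i. (axis i 1, axis c0 1)) ` fst ` F \<union> (\<lambda>j. (0, axis j 1 - axis c0 1)) ` (snd ` F - {c0})"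
  have "v (i, j) \<in> span S" if ij: "(i, j) \<in> F" for i j
  proof -
    from ij have base: "(axis i 1, axis c0 1) \<in> span S"
      by (intro span_base) (force simp: S_def)
    show "v (i, j) \<in> span S"
    proof (cases "j = c0")
      case False
      then have "(0, axis j 1 - axis c0 1) \<in> span S"
        using ij by (intro span_base) (force simp: S_def)
      with base have "(axis i 1, axis c0 1) + (0, axis j 1 - axis c0 1) \<in> span S"
        by (intro span_add)
      then show ?thesis by (simp add: v_def)
    qed (use base in \<open>simp add: v_def\<close>)
  qed
  then have "v ` F \<subseteq> span S" by auto
  then have "card (v ` F) \<le> card S"
    using real_vector.independent_span_bound[of S "v ` F"] \<open>\<not> dependent (v ` F)\<close>
    by (simp add: S_def)
  also have "card S \<le> card (fst ` F) + card (snd ` F - {c0})"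
    unfolding S_def by (rule order_trans[OF card_Un_le add_mono[OF card_image_le card_image_le]]) auto
  also have "\<dots> < card F"
    using c0 assms(2) card_gt_0_iff[of "snd ` F"] by auto
  also have "card F = card (v ` F)"
    by (rule card_image[symmetric]) (auto simp: inj_on_def v_def axis_eq_axis)
  finally show False by simp
qed

lemma sum_pairs_with_fst:
  fixes F :: "('a::finite \<times> 'b::finite) set"
  shows "(\<Sum>x\<in>F. if i = fst x then g x else 0) = (\<Sum>j\<in>UNIV. if (i, j) \<in> F then g (i, j) else 0)"
proof -
  have "{x\<in>F. i = fst x} = Pair i ` {j. (i, j) \<in> F}" by force
  then have "(\<Sum>x\<in>{x\<in>F. i = fst x}. g x) = (\<Sum>j\<in>{j. (i, j) \<in> F}. g (i, j))"
    by (simp add: sum.reindex inj_on_def)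
  then show ?thesis
    by (simp add: sum.inter_filter[symmetric])
qed

lemma sum_pairs_with_snd:
  fixes F :: "('a::finite \<times> 'b::finite) set"
  shows "(\<Sum>x\<in>F. if j = snd x then g x else 0) = (\<Sum>i\<in>UNIV. if (i, j) \<in> F then g (i, j) else 0)"
proof -
  have "{x\<in>F. j = snd x} = (\<lambda>i. (i, j)) ` {i. (i, j) \<in> F}" by force
  then have "(\<Sum>x\<in>{x\<in>F. j = snd x}. g x) = (\<Sum>i\<in>{i. (i, j) \<in> F}. g (i, j))"
    by (simp add: sum.reindex inj_on_def)
  then show ?thesis
    by (simp add: sum.inter_filter[symmetric])
qed

lemma zero_line_sums_matrix_supported_on:
  fixes F :: "('n::finite \<times> 'n) set"
  assumes "F \<noteq> {}" "card (fst ` F) + card (snd ` F) \<le> card F"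
  shows "\<exists>D::real^'n^'n. D \<noteq> 0 \<and> zero_line_sums D \<and> (\<forall>i j. D$i$j \<noteq> 0 \<longrightarrow> (i, j) \<in> F)"
proof -
  define v :: "'n \<times> 'n \<Rightarrow> (real^'n) \<times> (real^'n)"
    where "v = (\<lambda>(i, j). (axis i 1, axis j 1))"
  have inj: "inj_on v F"
    by (auto simp: inj_on_def v_def axis_eq_axis)
  have "dependent (v ` F)"
    using incidence_vectors_dependent[OF assms] by (simp add: v_def)
  then obtain u where u: "\<exists>w\<in>v ` F. u w \<noteq> 0" "(\<Sum>w\<in>v ` F. u w *\<^sub>R w) = 0"
    using real_vector.dependent_finite[of "v ` F"] by auto
  define a where "a x = u (v x)" for x
  have combination: "(\<Sum>x\<in>F. a x *\<^sub>R v x) = 0"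
    using u(2) by (simp add: sum.reindex[OF inj] a_def)
  define D :: "real^'n^'n" where "D = (\<chi> i j. if (i, j) \<in> F then a (i, j) else 0)"
  have "(\<Sum>j\<in>UNIV. D$i$j) = fst (\<Sum>x\<in>F. a x *\<^sub>R v x) $ i" for i
    using sum_pairs_with_fst[where F = F and i = i and g = a]
    by (simp add: D_def fst_sum sum_component v_def axis_def if_distrib case_prod_beta cong: if_cong)
  moreover have "(\<Sum>i\<in>UNIV. D$i$j) = snd (\<Sum>x\<in>F. a x *\<^sub>R v x) $ j" for j
    using sum_pairs_with_snd[where F = F and j = j and g = a]
    by (simp add: D_def snd_sum sum_component v_def axis_def if_distrib case_prod_beta cong: if_cong)
  ultimately have "zero_line_sums D"
    by (simp add: zero_line_sums_def combination)
  moreover from u(1) obtain x where "x \<in> F" "a x \<noteq> 0" by (auto simp: a_def)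
  then have "D$(fst x)$(snd x) \<noteq> 0" by (simp add: D_def)
  then have "D \<noteq> 0" by auto
  ultimately show ?thesis
    by (intro exI[of _ D]) (auto simp: D_def split: if_splits)
qed

lemma fractional_doubly_stochastic_zero_line_sums_direction:
  fixes X :: "real^'n^'n"
  assumes X: "doubly_stochastic X" and fractional: "0 < X$i0$j0" "X$i0$j0 < 1"
  shows "\<exists>D. D \<noteq> 0 \<and> zero_line_sums D \<and> (\<forall>i j. D$i$j \<noteq> 0 \<longrightarrow> 0 < X$i$j \<and> X$i$j < 1)"
proof -
  define F where "F = {(i, j). 0 < X$i$j \<and> X$i$j < 1}"
  have entries: "0 \<le> X$i$j \<and> X$i$j \<le> 1" for i j
    using doubly_stochastic_entry_bounds[OF X] by auto
  have "2 * card (fst ` F) \<le> card F"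
  proof (rule card_ge_twice_card_fst)
    fix i assume "i \<in> fst ` F"
    then obtain j where "0 < X$i$j" "X$i$j < 1" by (auto simp: F_def)
    then show "2 \<le> card {j. (i, j) \<in> F}"
      using X entries card_fractional_entries_ge_2[of "\<lambda>j. X$i$j" j]
      by (simp add: doubly_stochastic_def F_def)
  qed
  moreover have "2 * card (fst ` prod.swap ` F) \<le> card (prod.swap ` F)"
  proof (rule card_ge_twice_card_fst)
    fix j assume "j \<in> fst ` prod.swap ` F"
    then obtain i where "0 < X$i$j" "X$i$j < 1" by (auto simp: F_def)
    moreover have "{i. (j, i) \<in> prod.swap ` F} = {i. 0 < X$i$j \<and> X$i$j < 1}"
      by (auto simp: F_def image_iff)
    ultimately show "2 \<le> card {i. (j, i) \<in> prod.swap ` F}"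
      using X entries card_fractional_entries_ge_2[of "\<lambda>i. X$i$j" i]
      by (simp add: doubly_stochastic_def)
  qed
  moreover have "fst ` prod.swap ` F = snd ` F" "card (prod.swap ` F) = card F"
    by (force simp: image_iff, simp add: card_image)
  moreover have "F \<noteq> {}" using fractional by (auto simp: F_def)
  ultimately obtain D :: "real^'n^'n" where "D \<noteq> 0" "zero_line_sums D" "\<forall>i j. D$i$j \<noteq> 0 \<longrightarrow> (i, j) \<in> F"
    using zero_line_sums_matrix_supported_on[of F] by auto
  then show ?thesis by (auto simp: F_def)
qed

section \<open>Local minimizers are permutation matrices\<close>

definition powr_penalty :: "real \<Rightarrow> real \<Rightarrow> real^'n^'n \<Rightarrow> real" where
  "powr_penalty p e X = (\<Sum>i\<in>UNIV. \<Sum>j\<in>UNIV. (X$i$j + e) powr p)"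

lemma F_obj_eq_penalty: "F_obj f \<sigma> p e X = f X + \<sigma> * powr_penalty p e X"
  by (simp add: F_obj_def powr_penalty_def)

lemma powr_penalty_midpoint_gap:
  fixes X D :: "real^'n^'n"
  assumes small: "\<And>i j. D$i$j \<noteq> 0 \<Longrightarrow> \<bar>D$i$j\<bar> < X$i$j \<and> X$i$j + \<bar>D$i$j\<bar> \<le> 1"
    and "0 \<le> e" "0 < p" "p < 1"
  shows "powr_penalty p e (X + D) + powr_penalty p e (X - D) - 2 * powr_penalty p e X
           \<le> - (p * (1 - p) * (1 + e) powr (p - 2)) * (norm D)\<^sup>2"
proof -
  define nu where "nu = p * (1 - p) * (1 + e) powr (p - 2)"
  have entry_gap: "(X$i$j + D$i$j + e) powr p + (X$i$j - D$i$j + e) powr p - 2 * (X$i$j + e) powr p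
      \<le> - nu * (D$i$j)\<^sup>2" for i j
    using powr_midpoint_concavity_gap[of "D$i$j" "X$i$j" e p] small[of i j] assms(2-)
    by (cases "D$i$j = 0") (auto simp: nu_def)
  have "powr_penalty p e (X + D) + powr_penalty p e (X - D) - 2 * powr_penalty p e X
      = (\<Sum>i\<in>UNIV. \<Sum>j\<in>UNIV. (X$i$j + D$i$j + e) powr p + (X$i$j - D$i$j + e) powr p - 2 * (X$i$j + e) powr p)"
    by (simp add: powr_penalty_def sum.distrib sum_subtractf sum_distrib_left)
  also have "\<dots> \<le> (\<Sum>i\<in>UNIV. \<Sum>j\<in>UNIV. - nu * (D$i$j)\<^sup>2)"
    by (intro sum_mono entry_gap)
  also have "\<dots> = - nu * (norm D)\<^sup>2"
    by (simp add: norm_matrix_sq sum_distrib_left)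
  finally show ?thesis unfolding nu_def .
qed

lemma small_multiple_inside_unit_box:
  fixes X D :: "real^'n^'n"
  assumes inside: "\<And>i j. D$i$j \<noteq> 0 \<Longrightarrow> 0 < X$i$j \<and> X$i$j < 1" and "0 < \<delta>"
  obtains s where "0 < s" "norm (s *\<^sub>R D) < \<delta>"
    "\<And>i j. (s *\<^sub>R D)$i$j \<noteq> 0 \<Longrightarrow> \<bar>(s *\<^sub>R D)$i$j\<bar> < X$i$j \<and> X$i$j + \<bar>(s *\<^sub>R D)$i$j\<bar> \<le> 1"
proof -
  have small_scale: "\<forall>\<^sub>F s in at_right 0. \<bar>s\<bar> * c < r" if "0 < r" for c r :: real
    by (rule order_tendstoD(2)[OF _ that]) (auto intro!: tendsto_eq_intros)
  have "\<forall>\<^sub>F s in at_right 0. 0 < s \<and> \<bar>s\<bar> * norm D < \<delta> \<and>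
      (\<forall>i j. \<bar>s\<bar> * \<bar>D$i$j\<bar> < (if D$i$j = 0 then 1 else min (X$i$j) (1 - X$i$j)))"
    using \<open>0 < \<delta>\<close> inside
    by (intro eventually_conj eventually_at_right_less small_scale eventually_all_finite) auto
  then obtain s where "0 < s" "s * norm D < \<delta>"
      and s: "\<forall>i j. s * \<bar>D$i$j\<bar> < (if D$i$j = 0 then 1 else min (X$i$j) (1 - X$i$j))"
    using eventually_happens'[OF trivial_limit_at_right_real] by force
  show ?thesis
  proof (rule that[OF \<open>0 < s\<close>])
    show "norm (s *\<^sub>R D) < \<delta>" using \<open>0 < s\<close> \<open>s * norm D < \<delta>\<close> by simp
    fix i j assume "(s *\<^sub>R D)$i$j \<noteq> 0"
    then show "\<bar>(s *\<^sub>R D)$i$j\<bar> < X$i$j \<and> X$i$j + \<bar>(s *\<^sub>R D)$i$j\<bar> \<le> 1"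
      using s[rule_format, of i j] \<open>0 < s\<close> by (simp add: abs_mult)
  qed
qed

lemma local_minimizer_imp_permutation_matrix:
  fixes f :: "real^'n^'n \<Rightarrow> real" and G :: "real^'n^'n \<Rightarrow> real^'n^'n"
  assumes curv_hi: "\<And>X Y. doubly_stochastic X \<Longrightarrow> doubly_stochastic Y \<Longrightarrow>
         f Y - f X - G X \<bullet> (Y - X) \<le> nu_hi / 2 * (norm (Y - X))\<^sup>2"
    and p: "0 < p" "p < 1" and e: "0 \<le> e"
    and \<sigma>: "\<sigma> > max (nu_hi / (p * (1 - p) * (1 + e) powr (p - 2))) 0"
    and X_min: "local_minimizer_on (F_obj f \<sigma> p e) {X. doubly_stochastic X} X"
  shows "permutation_matrix X"
proof (rule ccontr)
  assume not_perm: "\<not> permutation_matrix X"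
  define nu where "nu = p * (1 - p) * (1 + e) powr (p - 2)"
  have "0 < nu" using p e by (simp add: nu_def)
  with \<sigma> have "nu_hi < \<sigma> * nu" and "0 < \<sigma>"
    by (simp_all add: nu_def pos_divide_less_eq)
  obtain \<delta> where "\<delta> > 0" and \<delta>: "\<And>Y. doubly_stochastic Y \<Longrightarrow> dist Y X < \<delta> \<Longrightarrow>
      F_obj f \<sigma> p e X \<le> F_obj f \<sigma> p e Y" and X: "doubly_stochastic X"
    using X_min by (auto simp: local_minimizer_on_def)
  obtain i0 j0 where "0 < X$i0$j0" "X$i0$j0 < 1"
    using not_perm doubly_stochastic_01_imp_permutation_matrix[OF X]
      doubly_stochastic_entry_bounds[OF X] by (metis less_eq_real_def)
  then obtain D where "D \<noteq> 0" "zero_line_sums D" "\<And>i j. D$i$j \<noteq> 0 \<Longrightarrow> 0 < X$i$j \<and> X$i$j < 1"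
    using fractional_doubly_stochastic_zero_line_sums_direction[OF X] by blast
  then obtain s where "0 < s" and "norm (s *\<^sub>R D) < \<delta>"
    and inside: "\<And>i j. (s *\<^sub>R D)$i$j \<noteq> 0 \<Longrightarrow>
      \<bar>(s *\<^sub>R D)$i$j\<bar> < X$i$j \<and> X$i$j + \<bar>(s *\<^sub>R D)$i$j\<bar> \<le> 1"
    using small_multiple_inside_unit_box \<open>\<delta> > 0\<close> by metis
  define E where "E = s *\<^sub>R D"
  have "\<bar>E$i$j\<bar> \<le> X$i$j" for i j
    using inside[of i j] doubly_stochastic_entry_bounds(1)[OF X, of i j]
    by (cases "E$i$j = 0") (auto simp: E_def)
  then have "doubly_stochastic (X + E)" "doubly_stochastic (X - E)"
    using doubly_stochastic_add_zero_line_sums[OF X zero_line_sums_scaleR] \<open>zero_line_sums D\<close>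
    by (auto simp: E_def)
  then have F_le: "F_obj f \<sigma> p e X \<le> F_obj f \<sigma> p e (X + E)" "F_obj f \<sigma> p e X \<le> F_obj f \<sigma> p e (X - E)"
    using \<delta> \<open>norm (s *\<^sub>R D) < \<delta>\<close> by (auto simp: dist_norm E_def)
  have f_gap: "f (X + E) + f (X - E) - 2 * f X \<le> nu_hi * (norm E)\<^sup>2"
    using curv_hi[OF X \<open>doubly_stochastic (X + E)\<close>] curv_hi[OF X \<open>doubly_stochastic (X - E)\<close>]
    by (simp add: inner_minus_right)
  have penalty_gap: "powr_penalty p e (X + E) + powr_penalty p e (X - E) - 2 * powr_penalty p e X
      \<le> - nu * (norm E)\<^sup>2"
    unfolding nu_def E_def using inside e p by (rule powr_penalty_midpoint_gap)
  have "0 \<le> (f (X + E) + f (X - E) - 2 * f X)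
      + \<sigma> * (powr_penalty p e (X + E) + powr_penalty p e (X - E) - 2 * powr_penalty p e X)"
    using F_le unfolding F_obj_eq_penalty by (simp add: algebra_simps)
  also have "\<dots> \<le> nu_hi * (norm E)\<^sup>2 + \<sigma> * (- nu * (norm E)\<^sup>2)"
    using f_gap penalty_gap \<open>0 < \<sigma>\<close> by (intro add_mono mult_left_mono) auto
  also have "\<dots> < 0"
    using \<open>nu_hi < \<sigma> * nu\<close> \<open>0 < s\<close> \<open>D \<noteq> 0\<close> by (simp add: E_def algebra_simps)
  finally show False by simp
qed

section \<open>Permutation matrices are local minimizers\<close>

lemma norm_sub_permutation_le_deficit:
  fixes Y P :: "real^'n^'n"
  assumes \<pi>: "\<pi> permutes UNIV" and P: "\<And>i j. P$i$j = (if j = \<pi> i then 1 else 0)"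
    and Y: "doubly_stochastic Y"
  shows "norm (Y - P) \<le> (\<Sum>i\<in>UNIV. 1 - Y$i$(\<pi> i))"
proof -
  define r where "r i = 1 - Y$i$(\<pi> i)" for i
  have r_nonneg: "0 \<le> r i" for i
    using doubly_stochastic_entry_bounds[OF Y] by (simp add: r_def)
  have \<pi>_inv: "\<pi> (inv \<pi> j) = j" "inv \<pi> (\<pi> i) = i" for i j
    using permutes_inverses[OF \<pi>] by auto
  \<comment> \<open>an off-permutation entry is bounded by the deficits of both its row and its column\<close>
  have entry_sq: "((Y - P)$i$j)\<^sup>2 \<le> r i * r (inv \<pi> j)" for i j
  proof (cases "j = \<pi> i")
    case True
    then show ?thesis using \<pi>_inv P by (simp add: r_def power2_eq_square algebra_simps)
  next
    case False
    have nonneg: "0 \<le> Y$i$j" for i j using doubly_stochastic_entry_bounds[OF Y] by simp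
    have "Y$i$j + Y$i$(\<pi> i) \<le> (\<Sum>j\<in>UNIV. Y$i$j)"
      using False nonneg by (intro add_le_sum_UNIV) auto
    then have "Y$i$j \<le> r i" using Y by (simp add: r_def doubly_stochastic_def)
    moreover have "Y$i$j + Y$(inv \<pi> j)$j \<le> (\<Sum>i\<in>UNIV. Y$i$j)"
      using False \<pi>_inv nonneg by (intro add_le_sum_UNIV[of "\<lambda>i. Y$i$j"]) auto
    then have "Y$i$j \<le> r (inv \<pi> j)" using Y \<pi>_inv by (simp add: r_def doubly_stochastic_def)
    ultimately have "(Y$i$j)\<^sup>2 \<le> r i * r (inv \<pi> j)"
      unfolding power2_eq_square using nonneg r_nonneg by (intro mult_mono) auto
    with False P show ?thesis by simp
  qed
  have "(norm (Y - P))\<^sup>2 \<le> (\<Sum>i\<in>UNIV. \<Sum>j\<in>UNIV. r i * r (inv \<pi> j))"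
    unfolding norm_matrix_sq by (intro sum_mono entry_sq)
  also have "\<dots> = (\<Sum>i\<in>UNIV. r i)\<^sup>2"
  proof -
    have "(\<Sum>j\<in>UNIV. r (inv \<pi> j)) = (\<Sum>i\<in>UNIV. r i)"
      using sum.permute[OF permutes_inv[OF \<pi>], of r] by (simp add: comp_def)
    then show ?thesis
      by (simp add: power2_eq_square sum_distrib_left[symmetric] sum_distrib_right)
  qed
  finally show ?thesis
    using r_nonneg by (simp add: r_def[symmetric] power2_le_iff_abs_le sum_nonneg)
qed

lemma powr_penalty_increase_near_permutation:
  fixes Y P :: "real^'n^'n"
  assumes \<pi>: "\<pi> permutes UNIV" and P: "\<And>i j. P$i$j = (if j = \<pi> i then 1 else 0)"
    and Y: "doubly_stochastic Y" and close: "\<And>i j. \<bar>Y$i$j - P$i$j\<bar> \<le> N" "N \<le> 1/2"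
    and "0 < e" "0 < p" "p < 1"
  shows "p * ((N + e) powr (p - 1) - (1/2 + e) powr (p - 1)) * (\<Sum>i\<in>UNIV. 1 - Y$i$(\<pi> i))
           \<le> powr_penalty p e Y - powr_penalty p e P"
proof -
  define a where "a = p * (N + e) powr (p - 1)"
  define b where "b = p * (1/2 + e) powr (p - 1)"
  have entries: "0 \<le> Y$i$j" "Y$i$j \<le> 1" for i j
    using doubly_stochastic_entry_bounds[OF Y] by auto
  \<comment> \<open>mass moved off the permutation pattern gains at slope a, mass removed from it loses at slope at most b\<close>
  have entry_gain: "a * Y$i$j - (if j = \<pi> i then a * Y$i$j + b * (1 - Y$i$j) else 0)
      \<le> (Y$i$j + e) powr p - (P$i$j + e) powr p" for i j
  proof (cases "j = \<pi> i")
    case True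
    then have "(1 + e) powr p - (Y$i$j + e) powr p \<le> p * ((1 + e) - (Y$i$j + e)) * (1/2 + e) powr (p - 1)"
      using close(1)[of i j] close(2) entries[of i j] P assms(6-) by (intro powr_diff_le_slope) auto
    with True P show ?thesis by (simp add: b_def algebra_simps)
  next
    case False
    then have "p * ((Y$i$j + e) - e) * (N + e) powr (p - 1) \<le> (Y$i$j + e) powr p - e powr p"
      using close(1)[of i j] close(2) entries[of i j] P assms(6-) by (intro powr_diff_ge_slope) auto
    with False P show ?thesis by (simp add: a_def algebra_simps)
  qed
  have row_gain: "(\<Sum>j\<in>UNIV. a * Y$i$j - (if j = \<pi> i then a * Y$i$j + b * (1 - Y$i$j) else 0))
      = (a - b) * (1 - Y$i$(\<pi> i))" for i
    using Y by (simp add: sum_subtractf sum_distrib_left[symmetric] doubly_stochastic_def algebra_simps)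
  have "p * ((N + e) powr (p - 1) - (1/2 + e) powr (p - 1)) * (\<Sum>i\<in>UNIV. 1 - Y$i$(\<pi> i))
      = (a - b) * (\<Sum>i\<in>UNIV. 1 - Y$i$(\<pi> i))"
    by (simp add: a_def b_def right_diff_distrib)
  also have "\<dots> = (\<Sum>i\<in>UNIV. \<Sum>j\<in>UNIV. a * Y$i$j - (if j = \<pi> i then a * Y$i$j + b * (1 - Y$i$j) else 0))"
    by (simp only: row_gain sum_distrib_left)
  also have "\<dots> \<le> (\<Sum>i\<in>UNIV. \<Sum>j\<in>UNIV. (Y$i$j + e) powr p - (P$i$j + e) powr p)"
    by (intro sum_mono entry_gain)
  also have "\<dots> = powr_penalty p e Y - powr_penalty p e P"
    by (simp add: powr_penalty_def sum_subtractf)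
  finally show ?thesis .
qed

lemma norm_permutation_matrix:
  assumes "permutation_matrix (P :: real^'n^'n)"
  shows "norm P = sqrt (real CARD('n))"
proof -
  obtain \<pi> where "\<And>i j. P$i$j = (if j = \<pi> i then 1 else 0)"
    using assms unfolding permutation_matrix_def by blast
  then have "(P$i$j)\<^sup>2 = (if j = \<pi> i then 1 else 0)" for i j
    by simp
  then have "(norm P)\<^sup>2 = real CARD('n)"
    by (simp add: norm_matrix_sq)
  then show ?thesis
    by (metis norm_ge_zero real_sqrt_unique)
qed

lemma norm_gradient_at_permutation_le:
  fixes G :: "real^'n^'n \<Rightarrow> real^'n^'n"
  assumes lip: "\<And>X Y. unit_box_matrix X \<Longrightarrow> unit_box_matrix Y \<Longrightarrow> norm (G X - G Y) \<le> L * norm (X - Y)"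
    and P: "permutation_matrix P"
  shows "0 \<le> L" "norm (G P) \<le> norm (G 0) + L * sqrt (real CARD('n))"
proof -
  have "unit_box_matrix P"
    using doubly_stochastic_entry_bounds[OF permutation_matrix_doubly_stochastic[OF P]]
    by (simp add: unit_box_matrix_def)
  then have lip_0P: "norm (G P - G 0) \<le> L * sqrt (real CARD('n))"
    using lip[of P 0] norm_permutation_matrix[OF P] by (simp add: unit_box_matrix_def)
  then have "0 \<le> L * sqrt (real CARD('n))"
    by (rule order_trans[OF norm_ge_zero])
  then show "0 \<le> L"
    by (simp add: zero_le_mult_iff)
  show "norm (G P) \<le> norm (G 0) + L * sqrt (real CARD('n))"
    using norm_triangle_sub[of "G P" "G 0"] lip_0P by linarith
qed

lemma norm_gradient_below_penalty_slope:
  fixes G :: "real^'n^'n \<Rightarrow> real^'n^'n"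
  assumes lip: "\<And>X Y. unit_box_matrix X \<Longrightarrow> unit_box_matrix Y \<Longrightarrow> norm (G X - G Y) \<le> L * norm (X - Y)"
    and P: "permutation_matrix P" and p: "0 < p" "p < 1" and e: "0 < e" and c: "1 < c"
    and \<sigma>: "\<sigma> > c / p * (L * (2 + sqrt (real CARD('n))) + norm (G 0))
              / (e powr (p - 1) - (1/2 + e) powr (p - 1))"
  shows "norm (G P) < \<sigma> * p * (e powr (p - 1) - (1/2 + e) powr (p - 1))"
proof -
  define B where "B = L * (2 + sqrt (real CARD('n))) + norm (G 0)"
  have "0 < e powr (p - 1) - (1/2 + e) powr (p - 1)"
    using p e by (simp add: powr_less_mono2_neg)
  with \<sigma> p have "c * B < \<sigma> * p * (e powr (p - 1) - (1/2 + e) powr (p - 1))"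
    by (simp add: B_def pos_divide_less_eq field_simps)
  moreover have "norm (G P) \<le> B" "0 \<le> B"
    using norm_gradient_at_permutation_le[OF lip P] by (auto simp: B_def algebra_simps)
  moreover have "B \<le> c * B"
    using c \<open>0 \<le> B\<close> by (simp add: mult_le_cancel_right1)
  ultimately show ?thesis
    by linarith
qed

lemma decrease_bound_of_lower_curvature:
  fixes f :: "'a::real_inner \<Rightarrow> real"
  assumes "nu_lo / 2 * (norm (Y - X))\<^sup>2 \<le> f Y - f X - G \<bullet> (Y - X)" and "norm (Y - X) \<le> m"
  shows "- ((norm G + \<bar>nu_lo\<bar> / 2 * norm (Y - X)) * m) \<le> f Y - f X"
proof -
  define N where "N = norm (Y - X)"
  have "- (norm G * N) \<le> G \<bullet> (Y - X)"
    using Cauchy_Schwarz_ineq2[of G "Y - X"] by (simp add: N_def)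
  moreover have "- \<bar>nu_lo\<bar> * N\<^sup>2 \<le> nu_lo * N\<^sup>2"
    by (intro mult_right_mono) auto
  moreover have "(norm G + \<bar>nu_lo\<bar> / 2 * N) * N \<le> (norm G + \<bar>nu_lo\<bar> / 2 * N) * m"
    using assms(2) by (intro mult_left_mono) (auto simp: N_def)
  moreover have "(norm G + \<bar>nu_lo\<bar> / 2 * N) * N = norm G * N + \<bar>nu_lo\<bar> / 2 * N\<^sup>2"
    by (simp add: power2_eq_square algebra_simps)
  ultimately show ?thesis
    using assms(1) unfolding N_def[symmetric] by linarith
qed

lemma F_obj_increase_near_permutation:
  fixes f :: "real^'n^'n \<Rightarrow> real" and G :: "real^'n^'n \<Rightarrow> real^'n^'n"
  assumes curv_lo: "\<And>X Y. doubly_stochastic X \<Longrightarrow> doubly_stochastic Y \<Longrightarrow>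
         nu_lo / 2 * (norm (Y - X))\<^sup>2 \<le> f Y - f X - G X \<bullet> (Y - X)"
    and \<pi>: "\<pi> permutes UNIV" and P: "\<And>i j. P$i$j = (if j = \<pi> i then 1 else 0)"
    and Y: "doubly_stochastic Y" and close: "norm (Y - P) \<le> 1/2"
    and "0 < e" "0 < p" "p < 1" "0 \<le> \<sigma>"
  shows "(\<sigma> * p * ((norm (Y - P) + e) powr (p - 1) - (1/2 + e) powr (p - 1))
            - norm (G P) - \<bar>nu_lo\<bar> / 2 * norm (Y - P)) * (\<Sum>i\<in>UNIV. 1 - Y$i$(\<pi> i))
         \<le> F_obj f \<sigma> p e Y - F_obj f \<sigma> p e P"
proof -
  define N where "N = norm (Y - P)"
  define m where "m = (\<Sum>i\<in>UNIV. 1 - Y$i$(\<pi> i))"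
  have "doubly_stochastic P"
    using \<pi> P by (auto simp: permutation_matrix_def intro!: permutation_matrix_doubly_stochastic)
  have "N \<le> m"
    unfolding N_def m_def by (rule norm_sub_permutation_le_deficit[OF \<pi> P Y])
  have "p * ((N + e) powr (p - 1) - (1/2 + e) powr (p - 1)) * m \<le> powr_penalty p e Y - powr_penalty p e P"
    unfolding m_def using abs_matrix_entry_le_norm[of "Y - P"] close assms(6-)
    by (intro powr_penalty_increase_near_permutation[OF \<pi> P Y]) (auto simp: N_def)
  then have "\<sigma> * (p * ((N + e) powr (p - 1) - (1/2 + e) powr (p - 1)) * m)
      \<le> \<sigma> * (powr_penalty p e Y - powr_penalty p e P)"
    using \<open>0 \<le> \<sigma>\<close> by (rule mult_left_mono)
  moreover have "- ((norm (G P) + \<bar>nu_lo\<bar> / 2 * N) * m) \<le> f Y - f P"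
    using curv_lo[OF \<open>doubly_stochastic P\<close> Y] \<open>N \<le> m\<close> unfolding N_def
    by (rule decrease_bound_of_lower_curvature)
  ultimately show ?thesis
    unfolding F_obj_eq_penalty N_def[symmetric] m_def[symmetric] by (simp add: algebra_simps)
qed

lemma permutation_matrix_local_minimizer:
  fixes f :: "real^'n^'n \<Rightarrow> real" and G :: "real^'n^'n \<Rightarrow> real^'n^'n"
  assumes lip: "\<And>X Y. unit_box_matrix X \<Longrightarrow> unit_box_matrix Y \<Longrightarrow> norm (G X - G Y) \<le> L * norm (X - Y)"
    and curv_lo: "\<And>X Y. doubly_stochastic X \<Longrightarrow> doubly_stochastic Y \<Longrightarrow>
         nu_lo / 2 * (norm (Y - X))\<^sup>2 \<le> f Y - f X - G X \<bullet> (Y - X)"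
    and p: "0 < p" "p < 1" and e: "0 < e" and c: "1 < c"
    and \<sigma>: "\<sigma> > c / p * (L * (2 + sqrt (real CARD('n))) + norm (G 0))
              / (e powr (p - 1) - (1/2 + e) powr (p - 1))"
    and P_perm: "permutation_matrix P"
  shows "local_minimizer_on (F_obj f \<sigma> p e) {X. doubly_stochastic X} P"
proof -
  obtain \<pi> where \<pi>: "\<pi> permutes UNIV" and P: "\<And>i j. P$i$j = (if j = \<pi> i then 1 else 0)"
    using P_perm unfolding permutation_matrix_def by blast
  define \<phi> where "\<phi> N = \<sigma> * p * ((N + e) powr (p - 1) - (1/2 + e) powr (p - 1))
      - norm (G P) - \<bar>nu_lo\<bar> / 2 * N" for N
  have grad_small: "norm (G P) < \<sigma> * (p * (e powr (p - 1) - (1/2 + e) powr (p - 1)))"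
    using norm_gradient_below_penalty_slope[OF lip P_perm p e c \<sigma>] by (simp add: mult.assoc)
  then have "0 < \<phi> 0"
    by (simp add: \<phi>_def mult.assoc)
  have "0 < p * (e powr (p - 1) - (1/2 + e) powr (p - 1))"
    using p e by (simp add: powr_less_mono2_neg)
  then have "0 \<le> \<sigma>"
    using grad_small by (metis norm_ge_zero order_le_less_trans zero_less_mult_pos2 less_imp_le)
  have "isCont \<phi> 0"
    using e unfolding \<phi>_def by (intro continuous_intros) auto
  then have "\<forall>\<^sub>F N in at 0. 0 < \<phi> N"
    using \<open>0 < \<phi> 0\<close> unfolding isCont_def by (rule order_tendstoD)
  then obtain \<delta> where "0 < \<delta>" and \<delta>: "\<And>N. N \<noteq> 0 \<Longrightarrow> dist N 0 < \<delta> \<Longrightarrow> 0 < \<phi> N"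
    unfolding eventually_at by auto
  show ?thesis
    unfolding local_minimizer_on_def
  proof (intro conjI exI[of _ "min \<delta> (1/2)"] ballI impI)
    show "P \<in> {X. doubly_stochastic X}" "0 < min \<delta> (1/2)"
      using permutation_matrix_doubly_stochastic[OF P_perm] \<open>0 < \<delta>\<close> by simp_all
    fix Y assume "Y \<in> {X. doubly_stochastic X}" and "dist Y P < min \<delta> (1/2)"
    then have Y: "doubly_stochastic Y" and "norm (Y - P) < \<delta>" "norm (Y - P) \<le> 1/2"
      by (simp_all add: dist_norm)
    have "0 \<le> \<phi> (norm (Y - P))"
      using \<delta>[of "norm (Y - P)"] \<open>0 < \<phi> 0\<close> \<open>norm (Y - P) < \<delta>\<close> by (cases "Y = P") auto
    moreover have "norm (Y - P) \<le> (\<Sum>i\<in>UNIV. 1 - Y$i$(\<pi> i))"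
      by (rule norm_sub_permutation_le_deficit[OF \<pi> P Y])
    ultimately have "0 \<le> \<phi> (norm (Y - P)) * (\<Sum>i\<in>UNIV. 1 - Y$i$(\<pi> i))"
      by (intro mult_nonneg_nonneg) (auto intro: order_trans[OF norm_ge_zero])
    also have "\<dots> \<le> F_obj f \<sigma> p e Y - F_obj f \<sigma> p e P"
      unfolding \<phi>_def using curv_lo \<pi> P Y \<open>norm (Y - P) \<le> 1/2\<close> e p \<open>0 \<le> \<sigma>\<close>
      by (rule F_obj_increase_near_permutation)
    finally show "F_obj f \<sigma> p e P \<le> F_obj f \<sigma> p e Y"
      by simp
  qed
qed

theorem theorem3p5:
  fixes f :: "real^'n^'n \<Rightarrow> real"
    and G :: "real^'n^'n \<Rightarrow> real^'n^'n"
    and L nu_lo nu_hi p :: real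
  assumes grad: "\<And>X. (f has_derivative (\<lambda>H. G X \<bullet> H)) (at X)"
    and lip: "\<And>X Y. unit_box_matrix X \<Longrightarrow> unit_box_matrix Y \<Longrightarrow> norm (G X - G Y) \<le> L * norm (X - Y)"
    and nu_le: "nu_lo \<le> nu_hi"
    and curv: "\<And>X Y. doubly_stochastic X \<Longrightarrow> doubly_stochastic Y \<Longrightarrow>
         nu_lo / 2 * (norm (Y - X))\<^sup>2 \<le> f Y - f X - G X \<bullet> (Y - X)
       \<and> f Y - f X - G X \<bullet> (Y - X) \<le> nu_hi / 2 * (norm (Y - X))\<^sup>2"
    and p: "0 < p" "p < 1"
  shows
   "(\<forall>\<epsilon> c \<sigma>. \<epsilon> > 0 \<longrightarrow> c > 1 \<longrightarrow>
        \<sigma> > c / p * (L * (2 + sqrt (real CARD('n))) + norm (G 0))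
              / (\<epsilon> powr (p - 1) - (1/2 + \<epsilon>) powr (p - 1)) \<longrightarrow>
        (\<forall>P. permutation_matrix P \<longrightarrow>
           local_minimizer_on (F_obj f \<sigma> p \<epsilon>) {X. doubly_stochastic X} P))
  \<and> (\<forall>\<epsilon> \<sigma>. \<epsilon> \<ge> 0 \<longrightarrow>
        \<sigma> > max (nu_hi / (p * (1 - p) * (1 + \<epsilon>) powr (p - 2))) 0 \<longrightarrow>
        (\<forall>X. local_minimizer_on (F_obj f \<sigma> p \<epsilon>) {X. doubly_stochastic X} X \<longrightarrow>
           permutation_matrix X))"
proof -
  have curv_lo: "\<And>X Y. doubly_stochastic X \<Longrightarrow> doubly_stochastic Y \<Longrightarrow>
      nu_lo / 2 * (norm (Y - X))\<^sup>2 \<le> f Y - f X - G X \<bullet> (Y - X)"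
    and curv_hi: "\<And>X Y. doubly_stochastic X \<Longrightarrow> doubly_stochastic Y \<Longrightarrow>
      f Y - f X - G X \<bullet> (Y - X) \<le> nu_hi / 2 * (norm (Y - X))\<^sup>2"
    using curv by blast+
  show ?thesis
    using permutation_matrix_local_minimizer[OF lip curv_lo p]
      local_minimizer_imp_permutation_matrix[OF curv_hi p]
    by blast
qed

end
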